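(* Let $n\ge 5$ be odd and let $x,y$ be adjacent vertices of $Q_n$ with $f_n(x)+f_n(y)=\operatorname{str}_{f_n}(Q_n)$. If $x$ and $y$ both begin with the bit $1$, then $$\operatorname{str}_{f_n}(Q_n)\le \operatorname{str}_{f_{n-2}}(Q_{n-2})+3\cdot 2^{n-2}+\binom{n-3}{\lceil (n-3)/2\rceil}+\binom{n-2}{\lceil (n-2)/2\rceil}.$$
   Context: $Q_n$ is the $n$-dimensional hypercube: vertices are the $n$-bit strings, adjacent iff they differ in exactly one position. For a bijection $f:V(G)\to\{1,\dots,|V(G)|\}$, $\operatorname{str}_f(G)=\max\{f(u)+f(v):uv\in E(G)\}$. An $n$-bit string is $x_1\cdots x_n$, $x_i\in\{0,1\}$; its weight is its number of $1$s. Lexicographic order: $x<y$ if for some $k$, $x_j=y_j$ for $j<k$ and $x_k<y_k$. $S_n^i$ is the sequence of $n$-bit strings of weight $i$ in increasing lexicographic order; $R_n^i$ is the same set in decreasing lexicographic order. $S_n$ is the concatenation $(R_n^1,R_n^3,\dots,R_n^{n-1},S_n^n,S_n^{n-2},\dots,S_n^2,S_n^0)$ for even $n$ and $(R_n^1,R_n^3,\dots,R_n^{n-2},R_n^n,S_n^{n-1},\dots,S_n^2,S_n^0)$ for odd $n$; $f_n$ maps the string in position $j$ of $S_n$ to $j$. *)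

theory Defs
  imports Main "HOL-Library.List_Lexorder"
begin

text \<open>n-bit strings are represented as bool lists of length n (False = 0, True = 1).
  The order on bool lists from List_Lexorder is the lexicographic order
  (False < True), which on equal-length lists is exactly the paper's order.\<close>

definition bitstrings :: "nat \<Rightarrow> bool list set" where
  "bitstrings n = {x. length x = n}"

definition weight :: "bool list \<Rightarrow> nat" where
  "weight x = count_list x True"

definition hc_adj :: "nat \<Rightarrow> bool list \<Rightarrow> bool list \<Rightarrow> bool" where
  "hc_adj n x y \<longleftrightarrow> length x = n \<and> length y = n \<and> card {i. i < n \<and> x ! i \<noteq> y ! i} = 1"

definition Sseq :: "nat \<Rightarrow> nat \<Rightarrow> bool list list" where
  "Sseq n i = sorted_list_of_set {x. length x = n \<and> weight x = i}"

definition Rseq :: "nat \<Rightarrow> nat \<Rightarrow> bool list list" where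
  "Rseq n i = rev (Sseq n i)"

text \<open>S_n: first R_n^i for odd i increasing (1,3,...), then S_n^i for even i
  decreasing (..., 2, 0). This covers both the even and odd case of the paper.\<close>
definition Sn :: "nat \<Rightarrow> bool list list" where
  "Sn n = concat (map (Rseq n) (filter odd [0..<Suc n]))
        @ concat (map (Sseq n) (rev (filter even [0..<Suc n])))"

definition fn :: "nat \<Rightarrow> bool list \<Rightarrow> nat" where
  "fn n x = Suc (LEAST j. j < length (Sn n) \<and> Sn n ! j = x)"

definition str_fn :: "nat \<Rightarrow> nat" where
  "str_fn n = Max {fn n u + fn n v | u v. hc_adj n u v}"

end

theory Submission
  imports Defs "HOL.Binomial_Plus"
begin

text \<open>Let r(z) be the lexicographic rank of z among the strings of its length and weight.
  Since f_n runs through the odd levels and then the even levels, a string of odd weight i has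
  label (\<Sum>l<i-1. C(n-1,l)) + C(n,i) - r(z), and one of even weight i has label
  2^n + 1 + r(z) - (\<Sum>l\<le>i. C(n-1,l)).

  Write x = 1cu and y = 1dv. If c \<noteq> d then u = v, and the two labels sum to at most 2^(n-2) + 1
  plus the claimed excess, while str(f_(n-2)) > 2^(n-2) because the all-zero string, labelled
  2^(n-2), has a neighbour. If c = d then u and v are adjacent in Q_(n-2); we compare with the
  edge uv when c = 1, and with the edge obtained by flipping the first bit of u and v when c = 0.
  In both cases the partner of x has the weight parity of x and a label involving r(u) with the
  same sign, and likewise for y, so the ranks cancel and only partial binomial sums remain, whose
  difference is at most 3 * 2^(n-2) plus two central binomial coefficients.\<close>

section \<open>Levels and lexicographic rank\<close>

definition level :: "nat \<Rightarrow> nat \<Rightarrow> bool list set" where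
  "level m w = {y. length y = m \<and> weight y = w}"

lemma weight_simps [simp]:
  "weight [] = 0" "weight (True # z) = Suc (weight z)" "weight (False # z) = weight z"
  by (simp_all add: weight_def)

lemma weight_le_length: "weight z \<le> length z"
  by (simp add: weight_def count_le_length)

lemma level_0: "level 0 w = (if w = 0 then {[]} else {})"
  by (auto simp: level_def)

lemma level_Suc_0: "level (Suc m) 0 = Cons False ` level m 0"
  apply (auto simp: level_def length_Suc_conv)
  subgoal for y ys by (cases y) auto
  done

lemma level_Suc_Suc:
  "level (Suc m) (Suc w) = Cons False ` level m (Suc w) \<union> Cons True ` level m w"
  apply (auto simp: level_def length_Suc_conv)
  subgoal for y ys by (cases y) auto
  done

lemma finite_bitstrings: "finite (bitstrings m)"
  using finite_lists_length_eq[of "UNIV :: bool set" m] by (simp add: bitstrings_def)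

lemma finite_level [simp]: "finite (level m w)"
  by (rule finite_subset[OF _ finite_bitstrings[of m]]) (auto simp: level_def bitstrings_def)

lemma card_level: "card (level m w) = m choose w"
proof (induction m arbitrary: w)
  case 0
  then show ?case by (simp add: level_0)
next
  case (Suc m)
  show ?case
  proof (cases w)
    case 0
    then show ?thesis using Suc by (simp add: level_Suc_0 card_image)
  next
    case (Suc w')
    have "card (level (Suc m) (Suc w')) = card (Cons False ` level m (Suc w')) + card (Cons True ` level m w')"
      unfolding level_Suc_Suc by (rule card_Un_disjoint) auto
    then show ?thesis using Suc \<open>\<And>w. card (level m w) = m choose w\<close> by (simp add: card_image)
  qed
qed

fun lex_rank :: "bool list \<Rightarrow> nat" where
  "lex_rank [] = 0"
| "lex_rank (False # z) = lex_rank z"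
| "lex_rank (True # z) = (length z choose Suc (weight z)) + lex_rank z"

lemma card_level_less: "card {y \<in> level (length z) (weight z). y < z} = lex_rank z"
proof (induction z)
  case Nil
  then show ?case by simp
next
  case (Cons b z)
  let ?below = "{y \<in> level (length z) (weight z). y < z}"
  show ?case
  proof (cases b)
    case False
    then have "{y \<in> level (length (b # z)) (weight (b # z)). y < b # z} = Cons False ` ?below"
      by (auto simp: level_def length_Suc_conv)
    then show ?thesis using Cons False by (simp add: card_image)
  next
    case True
    have "{y \<in> level (length (b # z)) (weight (b # z)). y < b # z}
        = Cons False ` level (length z) (Suc (weight z)) \<union> Cons True ` ?below"
      using True
      apply (auto simp: level_def length_Suc_conv)
      subgoal for y ys by (cases y) auto
      done
    moreover have "card (Cons False ` level (length z) (Suc (weight z)) \<union> Cons True ` ?below)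
        = card (Cons False ` level (length z) (Suc (weight z))) + card (Cons True ` ?below)"
      by (rule card_Un_disjoint) auto
    ultimately show ?thesis using Cons True by (simp add: card_image card_level)
  qed
qed

lemma lex_rank_less: "lex_rank z < length z choose weight z"
proof -
  have "{y \<in> level (length z) (weight z). y < z} \<subset> level (length z) (weight z)"
    by (auto simp: level_def)
  then have "card {y \<in> level (length z) (weight z). y < z} < card (level (length z) (weight z))"
    by (rule psubset_card_mono[OF finite_level])
  then show ?thesis by (simp add: card_level_less card_level)
qed

lemma nth_sorted_list_of_set_card_less:
  fixes S :: "'a :: linorder set"
  assumes "finite S" and "z \<in> S"
  shows "sorted_list_of_set S ! card {y \<in> S. y < z} = z"
proof -
  define xs where "xs = sorted_list_of_set S"
  have sorted: "sorted_wrt (<) xs" and set_xs: "set xs = S" and "distinct xs"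
    using assms by (auto simp: xs_def strict_sorted_list_of_set)
  obtain j where j: "j < length xs" "xs ! j = z"
    using assms set_xs by (metis in_set_conv_nth)
  have "{y \<in> S. y < z} = set (take j xs)"
  proof safe
    fix y assume "y \<in> S" "y < z"
    then obtain l where l: "l < length xs" "xs ! l = y"
      using set_xs by (metis in_set_conv_nth)
    have "l < j"
      using sorted_wrt_nth_less[OF sorted, of j l] j l \<open>y < z\<close>
      by (metis less_asym linorder_neqE_nat)
    then show "y \<in> set (take j xs)"
      using l j by (metis in_set_conv_nth length_take min_less_iff_conj nth_take)
  next
    fix y assume "y \<in> set (take j xs)"
    then obtain l where l: "l < j" "xs ! l = y"
      using j by (auto simp: in_set_conv_nth)
    then show "y \<in> S" using j set_xs by auto
    show "y < z" using l j sorted sorted_wrt_nth_less by blast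
  qed
  then have "card {y \<in> S. y < z} = j"
    using \<open>distinct xs\<close> j by (simp add: distinct_card)
  then show ?thesis using j by (simp add: xs_def)
qed

lemma set_Sseq: "set (Sseq n i) = level n i"
  by (simp add: Sseq_def level_def[symmetric])

lemma length_Sseq: "length (Sseq n i) = n choose i"
  by (simp add: Sseq_def level_def[symmetric] card_level)

lemma distinct_Sseq: "distinct (Sseq n i)"
  by (simp add: Sseq_def)

lemma nth_Sseq_lex_rank:
  assumes "length z = n"
  shows "Sseq n (weight z) ! lex_rank z = z"
proof -
  have "z \<in> level n (weight z)"
    using assms by (simp add: level_def)
  from nth_sorted_list_of_set_card_less[OF finite_level this] show ?thesis
    using card_level_less[of z] assms by (simp add: Sseq_def level_def[symmetric])
qed

lemma nth_Rseq_lex_rank: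
  "length z = n \<Longrightarrow> Rseq n (weight z) ! ((n choose weight z) - Suc (lex_rank z)) = z"
  using lex_rank_less[of z] by (simp add: Rseq_def rev_nth length_Sseq nth_Sseq_lex_rank)

section \<open>Partial sums of binomial coefficients\<close>

definition binom_sum_below :: "nat \<Rightarrow> nat \<Rightarrow> nat" where
  "binom_sum_below m t = (\<Sum>l<t. m choose l)"

lemma binom_sum_below_0 [simp]: "binom_sum_below m 0 = 0"
  by (simp add: binom_sum_below_def)

lemma binom_sum_below_Suc: "binom_sum_below m (Suc t) = binom_sum_below m t + (m choose t)"
  by (simp add: binom_sum_below_def)

lemma binom_sum_below_full: "Suc m \<le> t \<Longrightarrow> binom_sum_below m t = 2 ^ m"
proof (induction t rule: dec_induct)
  case base
  then show ?case by (simp add: binom_sum_below_def lessThan_Suc_atMost choose_row_sum)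
next
  case (step t)
  then show ?case by (simp add: binom_sum_below_Suc)
qed

lemma binom_sum_below_Suc_Suc:
  "binom_sum_below (Suc m) (Suc t) = binom_sum_below m (Suc t) + binom_sum_below m t"
  by (induction t) (simp_all add: binom_sum_below_Suc)

lemma sum_list_choose_odd_below:
  "sum_list (map (\<lambda>j. Suc m choose j) (filter odd [0..<i])) = binom_sum_below m (2 * (i div 2))"
proof (induction i)
  case 0
  then show ?case by simp
next
  case (Suc i)
  then show ?case
    by (cases "odd i") (auto elim!: oddE simp: binom_sum_below_Suc)
qed

lemma sum_list_choose_even_below:
  "sum_list (map (\<lambda>j. Suc m choose j) (filter even [0..<i]))
     = binom_sum_below m (if odd i then i else i - 1)"
proof (induction i)
  case 0
  then show ?case by simp
next
  case (Suc i)
  then show ?case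
    by (cases i) (auto simp: binom_sum_below_Suc)
qed

lemma binomial_le_ceiling_half: "m choose k \<le> m choose ((m + 1) div 2)"
proof -
  have "m choose k \<le> m choose (m div 2)"
    by (rule binomial_maximum)
  also have "\<dots> = m choose (m - m div 2)"
    by (rule binomial_symmetric) simp
  also have "m - m div 2 = (m + 1) div 2"
    by presburger
  finally show ?thesis .
qed

lemma binom_sum_below_Suc_Suc_Suc_Suc:
  "binom_sum_below (Suc (Suc m)) (Suc (Suc t)) = 4 * binom_sum_below m t + 3 * (m choose t) + (m choose Suc t)"
  unfolding binom_sum_below_Suc_Suc by (simp add: binom_sum_below_Suc)

section \<open>The labels of f_n\<close>

lemma Least_index_append:
  assumes "r < length xs" and "xs ! r = z" and "distinct xs" and "z \<notin> set ys"
  shows "(LEAST j. j < length (ys @ xs @ zs) \<and> (ys @ xs @ zs) ! j = z) = length ys + r"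
proof (rule Least_equality)
  show "length ys + r < length (ys @ xs @ zs) \<and> (ys @ xs @ zs) ! (length ys + r) = z"
    using assms by (simp add: nth_append)
next
  fix j
  assume j: "j < length (ys @ xs @ zs) \<and> (ys @ xs @ zs) ! j = z"
  show "length ys + r \<le> j"
  proof (rule ccontr)
    assume "\<not> length ys + r \<le> j"
    moreover have "\<not> j < length ys"
      using j assms(4) by (metis nth_append nth_mem)
    ultimately have "j - length ys < r" and "xs ! (j - length ys) = z"
      using j assms(1) by (auto simp: nth_append)
    then show False
      using nth_eq_iff_index_eq[OF assms(3)] assms(1,2) by fastforce
  qed
qed

lemma upt_Suc_split: "i \<le> n \<Longrightarrow> [0..<Suc n] = [0..<i] @ i # [Suc i..<Suc n]"
  using upt_add_eq_append[of 0 i "Suc n - i"] by (simp add: upt_conv_Cons)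

lemma fn_odd_weight:
  assumes "odd n" and "length z = n" and "odd (weight z)"
  shows "fn n z + lex_rank z = binom_sum_below (n - 1) (weight z - 1) + (n choose weight z)"
proof -
  define i where "i = weight z"
  define ys where "ys = concat (map (Rseq n) (filter odd [0..<i]))"
  define zs where "zs = concat (map (Rseq n) (filter odd [Suc i..<Suc n]))
                      @ concat (map (Sseq n) (rev (filter even [0..<Suc n])))"
  have "i \<le> n"
    using weight_le_length[of z] assms(2) by (simp add: i_def)
  then have Sn_split: "Sn n = ys @ Rseq n i @ zs"
    unfolding Sn_def ys_def zs_def upt_Suc_split[OF \<open>i \<le> n\<close>] using assms(3) by (simp add: i_def)
  have rank: "lex_rank z < n choose i"
    using lex_rank_less[of z] assms(2) by (simp add: i_def)
  have "z \<notin> set ys"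
    by (auto simp: ys_def Rseq_def set_Sseq level_def i_def)
  then have "(LEAST j. j < length (Sn n) \<and> Sn n ! j = z) = length ys + ((n choose i) - Suc (lex_rank z))"
    unfolding Sn_split using rank nth_Rseq_lex_rank[OF assms(2)]
    by (intro Least_index_append) (simp_all add: Rseq_def length_Sseq distinct_Sseq i_def)
  moreover obtain m where "n = Suc m"
    using assms(1) by (cases n) auto
  moreover have "length ys = binom_sum_below m (i - 1)"
    using assms(3) \<open>n = Suc m\<close>
    by (simp add: ys_def length_concat Rseq_def length_Sseq o_def sum_list_choose_odd_below i_def)
  ultimately show ?thesis
    using rank by (simp add: fn_def i_def)
qed

lemma fn_even_weight:
  assumes "odd n" and "length z = n" and "even (weight z)"
  shows "fn n z + binom_sum_below (n - 1) (Suc (weight z)) = 2 ^ n + 1 + lex_rank z"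
proof -
  define k where "k = weight z"
  define upper_evens where "upper_evens = filter even [Suc k..<Suc n]"
  define ys where "ys = concat (map (Rseq n) (filter odd [0..<Suc n]))
                      @ concat (map (Sseq n) (rev upper_evens))"
  define zs where "zs = concat (map (Sseq n) (rev (filter even [0..<k])))"
  have "k \<le> n"
    using weight_le_length[of z] assms(2) by (simp add: k_def)
  then have Sn_split: "Sn n = ys @ Sseq n k @ zs"
    unfolding Sn_def ys_def zs_def upper_evens_def
    by (subst (2) upt_Suc_split[of k]) (use assms(3) in \<open>simp_all add: k_def\<close>)
  have "z \<notin> set ys"
    using assms(3) by (auto simp: ys_def upper_evens_def Rseq_def set_Sseq level_def k_def)
  then have "(LEAST j. j < length (Sn n) \<and> Sn n ! j = z) = length ys + lex_rank z"
    unfolding Sn_split using lex_rank_less[of z] nth_Sseq_lex_rank[OF assms(2)] assms(2)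
    by (intro Least_index_append) (simp_all add: length_Sseq distinct_Sseq k_def)
  moreover obtain m where m: "n = Suc m"
    using assms(1) by (cases n) auto
  moreover have "length ys = 2 ^ m + sum_list (map (\<lambda>j. n choose j) upper_evens)"
    using assms(1) m
    by (simp add: ys_def length_concat Rseq_def length_Sseq o_def rev_map[symmetric]
        sum_list_choose_odd_below binom_sum_below_full del: upt_Suc)
  moreover have "2 ^ m = binom_sum_below m (Suc k) + sum_list (map (\<lambda>j. n choose j) upper_evens)"
  proof -
    have "filter even [0..<Suc n] = filter even [0..<Suc k] @ upper_evens"
      unfolding upper_evens_def upt_Suc_split[OF \<open>k \<le> n\<close>] by simp
    then show ?thesis
      using sum_list_choose_even_below[of m "Suc n"] sum_list_choose_even_below[of m "Suc k"]
        assms(1,3) m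
      by (simp add: binom_sum_below_full k_def)
  qed
  ultimately show ?thesis
    by (simp add: fn_def k_def)
qed

definition flip_first :: "bool list \<Rightarrow> bool list" where
  "flip_first z = (case z of [] \<Rightarrow> [] | c # z' \<Rightarrow> (\<not> c) # z')"

lemma fn_flip_first_even_weight:
  assumes "odd (Suc q)" and "length a = Suc q" and "even (weight a)"
  shows "fn (Suc q) (flip_first a) + lex_rank a = binom_sum_below q (Suc (weight a))"
proof -
  obtain c a' where a: "a = c # a'" and "length a' = q"
    using assms(2) by (cases a) auto
  show ?thesis
  proof (cases c)
    case False
    then show ?thesis
      using fn_odd_weight[of "Suc q" "True # a'"] assms a \<open>length a' = q\<close>
      by (simp add: flip_first_def binom_sum_below_Suc)
  next
    case True
    then obtain j where "weight a' = Suc j"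
      using assms(3) a by (cases "weight a'") auto
    then show ?thesis
      using fn_odd_weight[of "Suc q" "False # a'"] assms a \<open>length a' = q\<close> True
      by (simp add: flip_first_def binom_sum_below_Suc)
  qed
qed

lemma fn_flip_first_odd_weight:
  assumes "odd (Suc q)" and "length a = Suc q" and "odd (weight a)"
  shows "fn (Suc q) (flip_first a) + binom_sum_below q (Suc (weight a)) = 2 ^ Suc q + 1 + lex_rank a"
proof -
  obtain c a' where a: "a = c # a'" and "length a' = q"
    using assms(2) by (cases a) auto
  then show ?thesis
    using fn_even_weight[of "Suc q" "(\<not> c) # a'"] assms
    by (cases c) (simp_all add: flip_first_def binom_sum_below_Suc)
qed

section \<open>Edges and the strength\<close>

lemma not_hc_adj_0: "\<not> hc_adj 0 u v"
  by (simp add: hc_adj_def)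

lemma hc_adj_Cons_Cons:
  "hc_adj (Suc n) (c # u) (d # v) \<longleftrightarrow> c = d \<and> hc_adj n u v \<or> c \<noteq> d \<and> u = v \<and> length u = n"
proof -
  define D where "D = {i. i < n \<and> u ! i \<noteq> v ! i}"
  have "finite D"
    by (rule finite_subset[of _ "{..<n}"]) (auto simp: D_def)
  have "{i. i < Suc n \<and> (c # u) ! i \<noteq> (d # v) ! i} = (if c = d then {} else {0}) \<union> Suc ` D"
    by (auto simp: D_def less_Suc_eq_0_disj)
  then have "card {i. i < Suc n \<and> (c # u) ! i \<noteq> (d # v) ! i} = (if c = d then 0 else 1) + card D"
    using \<open>finite D\<close> by (simp add: card_image)
  moreover have "length u = n \<Longrightarrow> length v = n \<Longrightarrow> D = {} \<longleftrightarrow> u = v"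
    by (auto simp: D_def list_eq_iff_nth_eq)
  ultimately show ?thesis
    using \<open>finite D\<close> unfolding hc_adj_def D_def[symmetric] by auto
qed

lemma hc_adj_sym: "hc_adj n u v \<Longrightarrow> hc_adj n v u"
proof -
  have "{i. i < n \<and> u ! i \<noteq> v ! i} = {i. i < n \<and> v ! i \<noteq> u ! i}"
    by auto
  then show "hc_adj n u v \<Longrightarrow> hc_adj n v u"
    by (simp add: hc_adj_def)
qed

lemma hc_adj_weight:
  "hc_adj n u v \<Longrightarrow> weight v = Suc (weight u) \<or> weight u = Suc (weight v)"
proof (induction n arbitrary: u v)
  case 0
  then show ?case by (simp add: not_hc_adj_0)
next
  case (Suc n)
  then obtain c d u' v' where "u = c # u'" "v = d # v'"
    unfolding hc_adj_def by (metis length_Suc_conv)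
  with Suc.prems consider "c = d" "hc_adj n u' v'" | "c \<noteq> d" "u' = v'"
    by (auto simp: hc_adj_Cons_Cons)
  then show ?case
  proof cases
    case 1
    then show ?thesis using Suc.IH \<open>u = c # u'\<close> \<open>v = d # v'\<close> by (cases c) auto
  next
    case 2
    then show ?thesis using \<open>u = c # u'\<close> \<open>v = d # v'\<close> by (cases c) auto
  qed
qed

lemma hc_adj_flip_first: "hc_adj n u v \<Longrightarrow> hc_adj n (flip_first u) (flip_first v)"
proof (cases n)
  case (Suc m)
  moreover assume "hc_adj n u v"
  moreover from calculation obtain c d u' v' where "u = c # u'" "v = d # v'"
    unfolding hc_adj_def by (metis length_Suc_conv)
  ultimately show ?thesis
    by (auto simp: hc_adj_Cons_Cons flip_first_def)
qed (simp add: not_hc_adj_0)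

lemma str_fn_ge:
  assumes "hc_adj n u v"
  shows "fn n u + fn n v \<le> str_fn n"
proof -
  have "{fn n u + fn n v | u v. hc_adj n u v}
      \<subseteq> (\<lambda>(u, v). fn n u + fn n v) ` (bitstrings n \<times> bitstrings n)"
    by (auto simp: bitstrings_def hc_adj_def)
  then have "finite {fn n u + fn n v | u v. hc_adj n u v}"
    by (rule finite_subset) (use finite_bitstrings[of n] in simp)
  then show ?thesis
    unfolding str_fn_def using assms by (auto intro: Max_ge)
qed

lemma str_fn_gt_pow:
  assumes "odd n"
  shows "2 ^ n < str_fn n"
proof -
  obtain m where n: "n = Suc m"
    using assms by (cases n) auto
  have "lex_rank (replicate k False) = 0" for k
    by (induction k) auto
  then have "fn n (replicate n False) + binom_sum_below m 1 = 2 ^ n + 1"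
    using fn_even_weight[of n "replicate n False"] assms n
    by (simp add: weight_def del: replicate_Suc)
  then have "fn n (replicate n False) = 2 ^ n"
    by (simp add: binom_sum_below_Suc)
  moreover have "hc_adj n (replicate n False) (True # replicate m False)"
    by (simp add: n hc_adj_Cons_Cons)
  ultimately show ?thesis
    using str_fn_ge[of n "replicate n False" "True # replicate m False"] by (simp add: fn_def)
qed

section \<open>Removing the two leading bits\<close>

definition label_gap :: "nat \<Rightarrow> nat" where
  "label_gap q = 3 * 2 ^ Suc q + (q choose ((q + 1) div 2)) + (Suc q choose ((Suc q + 1) div 2))"

lemma fn_True_True_adjacent_le_odd_weight:
  assumes "odd (Suc q)" and adj: "hc_adj (Suc q) a b" and odd: "odd (weight a)"
  shows "fn (Suc (Suc (Suc q))) (True # True # a) + fn (Suc (Suc (Suc q))) (True # True # b)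
    \<le> fn (Suc q) a + fn (Suc q) b + label_gap q"
proof -
  have la: "length a = Suc q" and lb: "length b = Suc q"
    using adj by (auto simp: hc_adj_def)
  obtain j where j: "weight a = Suc j"
    using odd by (cases "weight a") auto
  have label_11a: "fn (Suc (Suc (Suc q))) (True # True # a) + lex_rank a
      = binom_sum_below (Suc (Suc q)) (Suc (Suc j)) + (Suc q choose Suc j)"
    using fn_odd_weight[of "Suc (Suc (Suc q))" "True # True # a"] assms(1) la odd j by simp
  have label_a: "fn (Suc q) a + lex_rank a = binom_sum_below q j + (Suc q choose Suc j)"
    using fn_odd_weight[of "Suc q" a] assms(1) la odd j by simp
  from hc_adj_weight[OF adj] show ?thesis
  proof
    assume wb: "weight b = Suc (weight a)"
    have label_11b: "fn (Suc (Suc (Suc q))) (True # True # b)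
          + binom_sum_below (Suc (Suc q)) (Suc (Suc (Suc (Suc (Suc j)))))
        = 2 ^ Suc (Suc (Suc q)) + 1 + (Suc (Suc q) choose Suc (Suc (Suc (Suc j))))
          + (Suc q choose Suc (Suc (Suc j))) + lex_rank b"
      using fn_even_weight[of "Suc (Suc (Suc q))" "True # True # b"] assms(1) lb odd wb j by simp
    have label_b: "fn (Suc q) b + binom_sum_below q (Suc (Suc (Suc j))) = 2 ^ Suc q + 1 + lex_rank b"
      using fn_even_weight[of "Suc q" b] assms(1) lb odd wb j by simp
    show ?thesis
      using label_11a label_11b label_a label_b
      by (simp add: label_gap_def binom_sum_below_Suc_Suc_Suc_Suc binom_sum_below_Suc)
  next
    assume wa: "weight a = Suc (weight b)"
    have label_11b: "fn (Suc (Suc (Suc q))) (True # True # b) + binom_sum_below (Suc (Suc q)) (Suc (Suc (Suc j)))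
        = 2 ^ Suc (Suc (Suc q)) + 1 + (Suc (Suc q) choose Suc (Suc j)) + (Suc q choose Suc j)
          + lex_rank b"
      using fn_even_weight[of "Suc (Suc (Suc q))" "True # True # b"] assms(1) lb odd wa j by simp
    have label_b: "fn (Suc q) b + binom_sum_below q (Suc j) = 2 ^ Suc q + 1 + lex_rank b"
      using fn_even_weight[of "Suc q" b] assms(1) lb odd wa j by simp
    show ?thesis
      using label_11a label_11b label_a label_b
        binomial_le_ceiling_half[of q j] binomial_le_ceiling_half[of "Suc q" "Suc j"]
      by (simp add: label_gap_def binom_sum_below_Suc_Suc_Suc_Suc binom_sum_below_Suc)
  qed
qed

lemma fn_True_True_adjacent_le:
  assumes "odd (Suc q)" and "hc_adj (Suc q) a b"
  shows "fn (Suc (Suc (Suc q))) (True # True # a) + fn (Suc (Suc (Suc q))) (True # True # b)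
    \<le> fn (Suc q) a + fn (Suc q) b + label_gap q"
proof -
  have "odd (weight a) \<or> odd (weight b)"
    using hc_adj_weight[OF assms(2)] by auto
  then show ?thesis
    using fn_True_True_adjacent_le_odd_weight[OF assms(1,2)]
      fn_True_True_adjacent_le_odd_weight[OF assms(1) hc_adj_sym[OF assms(2)]]
    by (auto simp: add.commute)
qed

lemma fn_True_False_adjacent_le_even_weight:
  assumes "odd (Suc q)" and adj: "hc_adj (Suc q) a b" and even: "even (weight a)"
  shows "fn (Suc (Suc (Suc q))) (True # False # a) + fn (Suc (Suc (Suc q))) (True # False # b)
    \<le> fn (Suc q) (flip_first a) + fn (Suc q) (flip_first b) + label_gap q"
proof -
  have la: "length a = Suc q" and lb: "length b = Suc q"
    using adj by (auto simp: hc_adj_def)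
  have odd: "odd (weight b)"
    using hc_adj_weight[OF adj] even by auto
  have label_10a: "fn (Suc (Suc (Suc q))) (True # False # a) + lex_rank a
      = binom_sum_below (Suc (Suc q)) (Suc (weight a))"
    using fn_odd_weight[of "Suc (Suc (Suc q))" "True # False # a"] assms(1) la even
    by (simp add: binom_sum_below_Suc)
  have label_10b: "fn (Suc (Suc (Suc q))) (True # False # b)
        + binom_sum_below (Suc (Suc q)) (Suc (Suc (weight b)))
      = 2 ^ Suc (Suc (Suc q)) + 1 + (Suc (Suc q) choose Suc (weight b)) + lex_rank b"
    using fn_even_weight[of "Suc (Suc (Suc q))" "True # False # b"] assms(1) lb odd by simp
  have label_flip_a: "fn (Suc q) (flip_first a) + lex_rank a = binom_sum_below q (Suc (weight a))"
    using fn_flip_first_even_weight[OF assms(1) la even] .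
  have label_flip_b:
    "fn (Suc q) (flip_first b) + binom_sum_below q (Suc (weight b)) = 2 ^ Suc q + 1 + lex_rank b"
    using fn_flip_first_odd_weight[OF assms(1) lb odd] .
  from hc_adj_weight[OF adj] show ?thesis
  proof
    assume wb: "weight b = Suc (weight a)"
    show ?thesis
      using label_10a label_10b label_flip_a label_flip_b wb by (simp add: label_gap_def binom_sum_below_Suc)
  next
    assume wa: "weight a = Suc (weight b)"
    show ?thesis
      using label_10a label_10b label_flip_a label_flip_b wa binomial_le_ceiling_half[of q "weight b"]
        binomial_le_ceiling_half[of "Suc q" "weight b"]
      by (simp add: label_gap_def binom_sum_below_Suc_Suc_Suc_Suc binom_sum_below_Suc)
  qed
qed

lemma fn_True_False_adjacent_le:
  assumes "odd (Suc q)" and "hc_adj (Suc q) a b"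
  shows "fn (Suc (Suc (Suc q))) (True # False # a) + fn (Suc (Suc (Suc q))) (True # False # b)
    \<le> fn (Suc q) (flip_first a) + fn (Suc q) (flip_first b) + label_gap q"
proof -
  have "even (weight a) \<or> even (weight b)"
    using hc_adj_weight[OF assms(2)] by auto
  then show ?thesis
    using fn_True_False_adjacent_le_even_weight[OF assms(1,2)]
      fn_True_False_adjacent_le_even_weight[OF assms(1) hc_adj_sym[OF assms(2)]]
    by (auto simp: add.commute)
qed

lemma fn_True_second_bit_pair_le:
  assumes "odd (Suc q)" and "length a = Suc q"
  shows "fn (Suc (Suc (Suc q))) (True # True # a) + fn (Suc (Suc (Suc q))) (True # False # a)
    \<le> 2 ^ Suc q + 1 + label_gap q"
proof (cases "odd (weight a)")
  case True
  have "fn (Suc (Suc (Suc q))) (True # True # a) + lex_rank a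
      = binom_sum_below (Suc (Suc q)) (Suc (weight a)) + (Suc q choose weight a)"
    using fn_odd_weight[of "Suc (Suc (Suc q))" "True # True # a"] assms True
    by (cases "weight a") simp_all
  moreover have "fn (Suc (Suc (Suc q))) (True # False # a)
        + binom_sum_below (Suc (Suc q)) (Suc (Suc (weight a)))
      = 2 ^ Suc (Suc (Suc q)) + 1 + (Suc (Suc q) choose Suc (weight a)) + lex_rank a"
    using fn_even_weight[of "Suc (Suc (Suc q))" "True # False # a"] assms True by simp
  ultimately show ?thesis
    using binomial_le_ceiling_half[of "Suc q" "weight a"]
    by (simp add: label_gap_def binom_sum_below_Suc)
next
  case False
  have "fn (Suc (Suc (Suc q))) (True # True # a)
        + binom_sum_below (Suc (Suc q)) (Suc (Suc (Suc (weight a))))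
      = 2 ^ Suc (Suc (Suc q)) + 1 + (Suc (Suc q) choose Suc (Suc (weight a)))
        + (Suc q choose Suc (weight a)) + lex_rank a"
    using fn_even_weight[of "Suc (Suc (Suc q))" "True # True # a"] assms False by simp
  moreover have "fn (Suc (Suc (Suc q))) (True # False # a) + lex_rank a
      = binom_sum_below (Suc (Suc q)) (Suc (weight a))"
    using fn_odd_weight[of "Suc (Suc (Suc q))" "True # False # a"] assms False
    by (simp add: binom_sum_below_Suc)
  ultimately show ?thesis
    by (simp add: label_gap_def binom_sum_below_Suc)
qed

theorem theorem2p5:
  fixes n :: nat and x y :: "bool list"
  assumes "n \<ge> 5" and "odd n"
    and "hc_adj n x y"
    and "fn n x + fn n y = str_fn n"
    and "hd x = True" and "hd y = True"
  shows "str_fn n \<le> str_fn (n - 2) + 3 * 2 ^ (n - 2)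
           + ((n - 3) choose ((n - 3 + 1) div 2)) + ((n - 2) choose ((n - 2 + 1) div 2))"
proof -
  define q where "q = n - 3"
  have n: "n = Suc (Suc (Suc q))" and odd: "odd (Suc q)"
    using assms(1,2) by (auto simp: q_def)
  obtain c a d b where x: "x = True # c # a" and y: "y = True # d # b"
    using assms(3,5,6) n unfolding hc_adj_def by (cases x; cases y; auto simp: length_Suc_conv)
  consider (ones) "c" "d" "hc_adj (Suc q) a b"
    | (zeros) "\<not> c" "\<not> d" "hc_adj (Suc q) a b"
    | (second_bit) "c \<noteq> d" "a = b" "length a = Suc q"
    using assms(3) unfolding n x y hc_adj_Cons_Cons by auto
  then have "fn n x + fn n y \<le> str_fn (Suc q) + label_gap q"
  proof cases
    case ones
    then show ?thesis
      using fn_True_True_adjacent_le[OF odd ones(3)] str_fn_ge[OF ones(3)] by (simp add: n x y)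
  next
    case zeros
    then show ?thesis
      using fn_True_False_adjacent_le[OF odd zeros(3)] str_fn_ge[OF hc_adj_flip_first[OF zeros(3)]]
      by (simp add: n x y)
  next
    case second_bit
    then have "fn n x + fn n y = fn n (True # True # a) + fn n (True # False # a)"
      unfolding x y by (cases c) auto
    then show ?thesis
      using fn_True_second_bit_pair_le[OF odd second_bit(3)] str_fn_gt_pow[OF odd] by (simp add: n)
  qed
  then show ?thesis
    using assms(4) by (simp add: n label_gap_def)
qed

end
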